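(* For every odd $n\ge1$ the homogenized operator $a_n^*$ vanishes; that is, $a^*_{2m+1}=0$ for all integers $m\ge0$.
   Context: Let $d\ge1$, ${\mathbb T}^d$ the unit torus. Let $\rho\in L^\infty({\mathbb T}^d)$ be real valued and $a\in L^\infty({\mathbb T}^d)$ take values in real symmetric $d\times d$ matrices, with $m_1>0$ such that $a(y)\xi\cdot\xi\ge m_1|\xi|^2$ for all $\xi$ and $\rho(y)\ge m_1$ a.e. For $g(t,x,y)$ periodic in $y$, $(\pi g)(t,x)=\frac1{|{\mathbb T}^d|}\int_{{\mathbb T}^d}g(t,x,y)dy$. ${\mathcal A}_{yy}=\mathrm{div}_y a(y)\mathrm{grad}_y$, ${\mathcal A}_{xx}=\mathrm{div}_x a(y)\mathrm{grad}_x$, ${\mathcal A}_{xy}=\mathrm{div}_x a(y)\mathrm{grad}_y+\mathrm{div}_y a(y)\mathrm{grad}_x$; ${\mathcal A}_{yy}^{-1}$ is the inverse of the bijection ${\mathcal A}_{yy}:(I-\pi)H^1({\mathbb T}^d)\to(I-\pi)H^{-1}({\mathbb T}^d)$. Operators from functions of $(t,x)$ to functions of $(t,x,y)$: $\chi_{-1}=0$, $\chi_0=I$, and for $k\ge1$, $\chi_k=-{\mathcal A}_{yy}^{-1}(I-\pi)[{\mathcal A}_{xy}\chi_{k-1}+({\mathcal A}_{xx}-\rho(y)\partial_t^2)\chi_{k-2}]$. For $n\ge1$ the homogenized operator of order $n$ is the constant-coefficient operator $a_n^*(\partial_t,\partial_x)=\pi\big((\rho(y)\partial_t^2-{\mathcal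 A}_{xx})\chi_{n-2}-{\mathcal A}_{xy}\chi_{n-1}\big)$. *)

theory Defs
  imports "HOL-Analysis.Analysis"
begin

text \<open>Unit torus T^d realised as 1-periodic functions on real^'d; fundamental cell = unit cube
  (so |T^d| = 1).\<close>

definition cube :: "(real^'d) set" where
  "cube = cbox 0 One"

definition periodic :: "(real^'d \<Rightarrow> 'b) \<Rightarrow> bool" where
  "periodic f \<longleftrightarrow> (\<forall>y i. f (y + axis i 1) = f y)"

text \<open>Mean value pi f = (1/|T^d|) * integral over the torus.\<close>
definition tmean :: "(real^'d \<Rightarrow> real) \<Rightarrow> real" where
  "tmean f = (LINT y:cube|lborel. f y)"

definition L2_tor :: "(real^'d \<Rightarrow> real) \<Rightarrow> bool" where
  "L2_tor f \<longleftrightarrow> f \<in> borel_measurable lborel \<and> set_integrable lborel cube (\<lambda>y. (f y)^2)"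

definition test_fun :: "(real^'d \<Rightarrow> real) \<Rightarrow> bool" where
  "test_fun \<phi> \<longleftrightarrow> periodic \<phi> \<and> (\<forall>y. \<phi> differentiable (at y)) \<and>
     (\<forall>j. continuous_on UNIV (\<lambda>y. frechet_derivative \<phi> (at y) (axis j 1)))"

definition weak_grad :: "(real^'d \<Rightarrow> real) \<Rightarrow> (real^'d \<Rightarrow> real^'d) \<Rightarrow> bool" where
  "weak_grad f G \<longleftrightarrow> periodic f \<and> periodic G \<and> L2_tor f \<and> (\<forall>j. L2_tor (\<lambda>y. G y $ j)) \<and>
     (\<forall>\<phi> j. test_fun \<phi> \<longrightarrow>
        (LINT y:cube|lborel. f y * frechet_derivative \<phi> (at y) (axis j 1))
        = - (LINT y:cube|lborel. G y $ j * \<phi> y))"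

text \<open>The element g0 + div_y F of H^{-1}(T^d), paired with psi in H^1 having weak gradient Dpsi.\<close>
definition hm1_pair :: "(real^'d \<Rightarrow> real) \<Rightarrow> (real^'d \<Rightarrow> real^'d) \<Rightarrow>
    (real^'d \<Rightarrow> real) \<Rightarrow> (real^'d \<Rightarrow> real^'d) \<Rightarrow> real" where
  "hm1_pair g0 F \<psi> D\<psi> = (LINT y:cube|lborel. g0 y * \<psi> y) - (LINT y:cube|lborel. F y \<bullet> D\<psi> y)"

text \<open>Symbols: with d_t -> tau, grad_x -> xi, chi_k acts on exp(tau t + xi.x) as multiplication
  by N k (a function of y) with weak gradient G k.  cell_seq expresses the recursive definition
  chi_k = -A_yy^{-1}(I-pi)[A_xy chi_{k-1} + (A_xx - rho d_t^2) chi_{k-2}] in weak form.\<close>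
definition cell_seq :: "(real^'d \<Rightarrow> real^'d^'d) \<Rightarrow> (real^'d \<Rightarrow> real) \<Rightarrow> real \<Rightarrow> real^'d \<Rightarrow>
    (int \<Rightarrow> real^'d \<Rightarrow> real) \<Rightarrow> (int \<Rightarrow> real^'d \<Rightarrow> real^'d) \<Rightarrow> bool" where
  "cell_seq a \<rho> \<tau> \<xi> N G \<longleftrightarrow>
     N (-1) = (\<lambda>_. 0) \<and> G (-1) = (\<lambda>_. 0) \<and> N 0 = (\<lambda>_. 1) \<and> G 0 = (\<lambda>_. 0) \<and>
     (\<forall>k\<ge>1. weak_grad (N k) (G k) \<and> tmean (N k) = 0 \<and>
        (\<forall>\<phi> D\<phi>. weak_grad \<phi> D\<phi> \<longrightarrow>
           (LINT y:cube|lborel. (a y *v G k y) \<bullet> D\<phi> y)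
           = hm1_pair
               (\<lambda>y. \<xi> \<bullet> (a y *v G (k-1) y) + (\<xi> \<bullet> (a y *v \<xi>) - \<rho> y * \<tau>^2) * N (k-2) y)
               (\<lambda>y. N (k-1) y *\<^sub>R (a y *v \<xi>))
               (\<lambda>y. \<phi> y - tmean \<phi>) D\<phi>))"

text \<open>Symbol of a_n^*: pi((rho d_t^2 - A_xx) chi_{n-2} - A_xy chi_{n-1}), where pi of an
  H^{-1} element is its pairing with the constant 1.\<close>
definition astar :: "(real^'d \<Rightarrow> real^'d^'d) \<Rightarrow> (real^'d \<Rightarrow> real) \<Rightarrow> real \<Rightarrow> real^'d \<Rightarrow>
    (int \<Rightarrow> real^'d \<Rightarrow> real) \<Rightarrow> (int \<Rightarrow> real^'d \<Rightarrow> real^'d) \<Rightarrow> int \<Rightarrow> real" where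
  "astar a \<rho> \<tau> \<xi> N G n =
     hm1_pair
       (\<lambda>y. (\<rho> y * \<tau>^2 - \<xi> \<bullet> (a y *v \<xi>)) * N (n-2) y - \<xi> \<bullet> (a y *v G (n-1) y))
       (\<lambda>y. - (N (n-1) y *\<^sub>R (a y *v \<xi>)))
       (\<lambda>_. 1) (\<lambda>_. 0)"

end

theory Submission
  imports Defs
begin

(*
  Test the weak cell equation for chi_k against chi_j (k, j >= 1).  With the energy form
  b(k,j) = int a grad N_k . grad N_j, the mixed form p(k,j) = int N_k xi . a grad N_j and the
  zero-order form s(k,j) = int (xi . a xi - rho tau^2) N_k N_j this gives
    b(k,j) = p(j,k-1) - p(k-1,j) + s(k-2,j),
  while the symbol of a_n^* is -(p(0,n-1) + s(n-2,0)).  Sum the recurrence with alternating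
  signs along the antidiagonal k + j = n.  For odd n the reflection j |-> n - j kills the
  alternating antidiagonal sums of the symmetric forms b and s and of the antisymmetric form
  p(j,k) - p(k,j); the only surviving term is the boundary term j = 0, which is a_n^*.
*)

definition alt_antidiagonal_sum :: "(int \<Rightarrow> int \<Rightarrow> real) \<Rightarrow> nat \<Rightarrow> real" where
  "alt_antidiagonal_sum f L = (\<Sum>j<L. (-1)^j * f (int L - 1 - int j) (int j))"

lemma minus_one_power_diff_Suc:
  assumes "i < L"
  shows "(-1::real) ^ (L - Suc i) = - ((-1) ^ L * (-1) ^ i)"
  using assms by (auto simp: minus_one_power_iff)

lemma alt_antidiagonal_sum_swap:
  "alt_antidiagonal_sum (\<lambda>k j. f j k) L = - ((-1) ^ L * alt_antidiagonal_sum f L)"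
proof -
  have "alt_antidiagonal_sum (\<lambda>k j. f j k) L
      = (\<Sum>i<L. (-1) ^ (L - Suc i) * f (int L - 1 - int i) (int i))"
    unfolding alt_antidiagonal_sum_def
    by (subst sum.nat_diff_reindex[symmetric])
      (auto intro!: sum.cong simp: of_nat_diff algebra_simps)
  also have "\<dots> = - ((-1) ^ L * alt_antidiagonal_sum f L)"
    unfolding alt_antidiagonal_sum_def sum_distrib_left sum_negf[symmetric]
    by (intro sum.cong) (auto simp: minus_one_power_diff_Suc)
  finally show ?thesis .
qed

lemma alt_antidiagonal_sum_symmetric:
  assumes "\<And>k j. f k j = f j k" and "even L"
  shows "alt_antidiagonal_sum f L = 0"
  using alt_antidiagonal_sum_swap[of f L] assms by simp

lemma alt_antidiagonal_sum_antisymmetric: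
  assumes "\<And>k j. f k j = - f j k" and "odd L"
  shows "alt_antidiagonal_sum f L = 0"
proof -
  have "alt_antidiagonal_sum (\<lambda>k j. f j k) L = - alt_antidiagonal_sum f L"
    unfolding alt_antidiagonal_sum_def by (simp add: assms(1)[of "int _"] sum_negf)
  then show ?thesis
    using alt_antidiagonal_sum_swap[of f L] assms(2) by simp
qed

lemma recurrence_odd_boundary_eq_zero:
  fixes b p s :: "int \<Rightarrow> int \<Rightarrow> real"
  assumes b_sym: "\<And>k j. b k j = b j k" and s_sym: "\<And>k j. s k j = s j k"
    and b0: "\<And>k. b k 0 = 0" and p0: "\<And>k. p k 0 = 0" and s_minus1: "\<And>j. s (-1) j = 0"
    and recurrence: "\<And>k j. k \<ge> 1 \<Longrightarrow> j \<ge> 1 \<Longrightarrow> b k j = p j (k - 1) - p (k - 1) j + s (k - 2) j"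
    and "odd n"
  shows "p 0 (int n - 1) + s (int n - 2) 0 = 0"
proof -
  obtain n' where n: "n = Suc n'" using \<open>odd n\<close> by (cases n) auto
  \<comment> \<open>F j is the defect of the recurrence at (n - j, j); it vanishes except at j = 0.\<close>
  define F where "F j = (-1)^j * (b (int n - int j) (int j)
      - (p (int j) (int n - 1 - int j) - p (int n - 1 - int j) (int j))
      - s (int n - 2 - int j) (int j))" for j
  have F_Suc: "F (Suc j) = 0" if "j < n'" for j
    using recurrence[of "int n - int (Suc j)" "int (Suc j)"] that n
    by (simp add: F_def diff_diff_eq add.commute)
  have b_sum: "alt_antidiagonal_sum b (Suc n) = (\<Sum>j<n. (-1)^j * b (int n - int j) (int j))"
    by (simp add: alt_antidiagonal_sum_def b_sym[of 0] b0)
  have p_sum: "alt_antidiagonal_sum (\<lambda>k j. p j k - p k j) n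
      = (\<Sum>j<n. (-1)^j * (p (int j) (int n - 1 - int j) - p (int n - 1 - int j) (int j)))"
    by (simp add: alt_antidiagonal_sum_def)
  have s_sum: "alt_antidiagonal_sum s n' = (\<Sum>j<n. (-1)^j * s (int n - 2 - int j) (int j))"
    by (simp add: alt_antidiagonal_sum_def n s_minus1 algebra_simps)
  have "- (p 0 (int n - 1) + s (int n - 2) 0) = F 0"
    by (simp add: F_def b0 p0)
  also have "\<dots> = (\<Sum>j<n. F j)"
    unfolding n sum.lessThan_Suc_shift by (simp add: F_Suc)
  also have "\<dots> = alt_antidiagonal_sum b (Suc n)
      - alt_antidiagonal_sum (\<lambda>k j. p j k - p k j) n - alt_antidiagonal_sum s n'"
    unfolding F_def right_diff_distrib sum_subtractf b_sum p_sum s_sum ..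
  also have "\<dots> = 0"
    using \<open>odd n\<close> n
    by (simp add: alt_antidiagonal_sum_symmetric alt_antidiagonal_sum_antisymmetric b_sym s_sym)
  finally show ?thesis by simp
qed

lemma borel_measurable_vec_nth [measurable (raw)]:
  fixes f :: "'a \<Rightarrow> 'b::real_normed_vector ^ 'n"
  shows "f \<in> borel_measurable M \<Longrightarrow> (\<lambda>x. f x $ i) \<in> borel_measurable M"
  by (rule borel_measurable_continuous_on[OF linear_continuous_on[OF bounded_linear_vec_nth]])

lemma cube_sets [measurable]: "cube \<in> sets lborel"
  unfolding cube_def by simp

lemma emeasure_cube_finite: "emeasure lborel cube < \<infinity>"
  unfolding cube_def by (rule emeasure_lborel_cbox_finite)

lemma L2_tor_const: "L2_tor (\<lambda>_. c)"
  unfolding L2_tor_def set_integrable_def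
  by (simp add: integrable_real_indicator[OF cube_sets emeasure_cube_finite])

lemma L2_tor_measurable: "L2_tor f \<Longrightarrow> f \<in> borel_measurable lborel"
  unfolding L2_tor_def by simp

lemma L2_tor_square_integrable: "L2_tor f \<Longrightarrow> set_integrable lborel cube (\<lambda>y. (f y)^2)"
  unfolding L2_tor_def by simp

lemma set_integrable_mult_L2_tor:
  assumes "L2_tor f" and "L2_tor g"
  shows "set_integrable lborel cube (\<lambda>y. f y * g y)"
proof (rule set_integrable_bound)
  show "set_integrable lborel cube (\<lambda>y. (f y)^2 + (g y)^2)"
    using assms[THEN L2_tor_square_integrable] by auto
  show "set_borel_measurable lborel cube (\<lambda>y. f y * g y)"
    using assms[THEN L2_tor_measurable] unfolding set_borel_measurable_def by measurable
  have "\<bar>f y * g y\<bar> \<le> (f y)^2 + (g y)^2" for y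
  proof -
    have "2 * (\<bar>f y\<bar> * \<bar>g y\<bar>) \<le> (f y)^2 + (g y)^2"
      using sum_squares_bound[of "\<bar>f y\<bar>" "\<bar>g y\<bar>"] by simp
    moreover have "0 \<le> \<bar>f y\<bar> * \<bar>g y\<bar>" by simp
    ultimately show ?thesis unfolding abs_mult by linarith
  qed
  then show "AE y in lborel. y \<in> cube \<longrightarrow> norm (f y * g y) \<le> norm ((f y)^2 + (g y)^2)"
    by simp
qed

lemma L2_tor_add:
  assumes "L2_tor f" and "L2_tor g"
  shows "L2_tor (\<lambda>y. f y + g y)"
proof -
  have "set_integrable lborel cube (\<lambda>y. (f y)^2 + (g y)^2 + 2 * (f y * g y))"
    using assms[THEN L2_tor_square_integrable] set_integrable_mult_L2_tor[OF assms] by auto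
  then show ?thesis
    using assms[THEN L2_tor_measurable] unfolding L2_tor_def by (simp add: power2_sum mult.assoc)
qed

lemma L2_tor_sum:
  assumes "finite S" and "\<And>i. i \<in> S \<Longrightarrow> L2_tor (f i)"
  shows "L2_tor (\<lambda>y. \<Sum>i\<in>S. f i y)"
  using assms by (induction S rule: finite_induct) (simp_all add: L2_tor_const L2_tor_add)

lemma L2_tor_mult_bounded:
  assumes "b \<in> borel_measurable lborel" and "AE y in lborel. \<bar>b y\<bar> \<le> B" and "L2_tor f"
  shows "L2_tor (\<lambda>y. b y * f y)"
proof -
  have "set_integrable lborel cube (\<lambda>y. (b y * f y)^2)"
  proof (rule set_integrable_bound)
    show "set_integrable lborel cube (\<lambda>y. B^2 * (f y)^2)"
      using L2_tor_square_integrable[OF assms(3)] by simp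
    show "set_borel_measurable lborel cube (\<lambda>y. (b y * f y)^2)"
      using assms(1) L2_tor_measurable[OF assms(3)] unfolding set_borel_measurable_def by measurable
    show "AE y in lborel. y \<in> cube \<longrightarrow> norm ((b y * f y)^2) \<le> norm (B^2 * (f y)^2)"
      using assms(2)
      by eventually_elim (simp add: power_mult_distrib mult_right_mono power2_le_iff_abs_le)
  qed
  then show ?thesis
    using assms(1) L2_tor_measurable[OF assms(3)] unfolding L2_tor_def by simp
qed

lemma L2_tor_inner_matrix_vector:
  fixes a :: "real^'d \<Rightarrow> real^'n^'m" and V :: "real^'d \<Rightarrow> real^'n"
  assumes "a \<in> borel_measurable lborel" and "AE y in lborel. \<forall>i j. \<bar>a y $ i $ j\<bar> \<le> B"
    and "\<And>j. L2_tor (\<lambda>y. V y $ j)"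
  shows "L2_tor (\<lambda>y. \<xi> \<bullet> (a y *v V y))"
proof -
  have "L2_tor (\<lambda>y. \<Sum>i\<in>UNIV. \<Sum>j\<in>UNIV. (\<xi> $ i * a y $ i $ j) * V y $ j)"
  proof (intro L2_tor_sum finite_UNIV L2_tor_mult_bounded assms(3))
    show "(\<lambda>y. \<xi> $ i * a y $ i $ j) \<in> borel_measurable lborel" for i j
      using assms(1) by measurable
    show "AE y in lborel. \<bar>\<xi> $ i * a y $ i $ j\<bar> \<le> \<bar>\<xi> $ i\<bar> * B" for i j
      using assms(2) by eventually_elim (simp add: abs_mult mult_left_mono)
  qed simp_all
  then show ?thesis
    by (simp add: inner_vec_def matrix_vector_mult_def sum_distrib_left mult.assoc)
qed

lemma inner_symmetric_matrix_vector:
  fixes A :: "real^'n^'n"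
  assumes "transpose A = A"
  shows "(A *v u) \<bullet> v = (A *v v) \<bullet> u"
  by (metis assms dot_lmul_matrix inner_commute transpose_matrix_vector)

locale cell_problem =
  fixes a :: "real^'d \<Rightarrow> real^'d^'d" and \<rho> :: "real^'d \<Rightarrow> real" and \<tau> :: real and \<xi> :: "real^'d"
    and N :: "int \<Rightarrow> real^'d \<Rightarrow> real" and G :: "int \<Rightarrow> real^'d \<Rightarrow> real^'d"
  assumes a_measurable: "a \<in> borel_measurable lborel"
    and \<rho>_measurable: "\<rho> \<in> borel_measurable lborel"
    and a_bounded: "\<exists>B. AE y in lborel. \<forall>i j. \<bar>a y $ i $ j\<bar> \<le> B"
    and \<rho>_bounded: "\<exists>B. AE y in lborel. \<bar>\<rho> y\<bar> \<le> B"
    and a_symmetric: "\<And>y. transpose (a y) = a y"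
    and is_cell_seq: "cell_seq a \<rho> \<tau> \<xi> N G"
begin

definition grad_form :: "int \<Rightarrow> int \<Rightarrow> real" where
  "grad_form k j = (LINT y:cube|lborel. (a y *v G k y) \<bullet> G j y)"

definition mixed_form :: "int \<Rightarrow> int \<Rightarrow> real" where
  "mixed_form k j = (LINT y:cube|lborel. N k y * (\<xi> \<bullet> (a y *v G j y)))"

definition zero_order_form :: "int \<Rightarrow> int \<Rightarrow> real" where
  "zero_order_form k j = (LINT y:cube|lborel. (\<xi> \<bullet> (a y *v \<xi>) - \<rho> y * \<tau>^2) * N k y * N j y)"

lemma N_minus_one: "N (-1) = (\<lambda>_. 0)" and G_minus_one: "G (-1) = (\<lambda>_. 0)"
  and N_zero: "N 0 = (\<lambda>_. 1)" and G_zero: "G 0 = (\<lambda>_. 0)"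
  using is_cell_seq unfolding cell_seq_def by auto

lemma cell_weak_form:
  assumes "k \<ge> 1" and "weak_grad \<phi> D\<phi>"
  shows "(LINT y:cube|lborel. (a y *v G k y) \<bullet> D\<phi> y)
    = hm1_pair (\<lambda>y. \<xi> \<bullet> (a y *v G (k-1) y) + (\<xi> \<bullet> (a y *v \<xi>) - \<rho> y * \<tau>^2) * N (k-2) y)
        (\<lambda>y. N (k-1) y *\<^sub>R (a y *v \<xi>)) (\<lambda>y. \<phi> y - tmean \<phi>) D\<phi>"
  using is_cell_seq assms unfolding cell_seq_def by blast

lemma weak_grad_N: "k \<ge> 1 \<Longrightarrow> weak_grad (N k) (G k)"
  and tmean_N: "k \<ge> 1 \<Longrightarrow> tmean (N k) = 0"
  using is_cell_seq unfolding cell_seq_def by auto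

lemma L2_tor_N: "k \<ge> -1 \<Longrightarrow> L2_tor (N k)"
  and L2_tor_G: "k \<ge> -1 \<Longrightarrow> L2_tor (\<lambda>y. G k y $ j)"
proof -
  assume "k \<ge> -1"
  then consider "k = -1" | "k = 0" | "k \<ge> 1" by linarith
  then have "L2_tor (N k) \<and> L2_tor (\<lambda>y. G k y $ j)"
    by cases (use weak_grad_N in \<open>auto simp: weak_grad_def N_minus_one G_minus_one N_zero G_zero
        L2_tor_const\<close>)
  then show "L2_tor (N k)" and "L2_tor (\<lambda>y. G k y $ j)" by simp_all
qed

lemma L2_tor_flux: "k \<ge> -1 \<Longrightarrow> L2_tor (\<lambda>y. \<xi> \<bullet> (a y *v G k y))"
  using a_bounded by (auto intro: L2_tor_inner_matrix_vector a_measurable L2_tor_G)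

lemma L2_tor_zero_order: "k \<ge> -1 \<Longrightarrow> L2_tor (\<lambda>y. (\<xi> \<bullet> (a y *v \<xi>) - \<rho> y * \<tau>^2) * N k y)"
proof -
  assume k: "k \<ge> -1"
  obtain Ba where "AE y in lborel. \<forall>i j. \<bar>a y $ i $ j\<bar> \<le> Ba" using a_bounded by blast
  then have "L2_tor (\<lambda>y. \<xi> \<bullet> (a y *v (N k y *\<^sub>R \<xi>)))"
    by (rule L2_tor_inner_matrix_vector[OF a_measurable])
      (auto simp: mult.commute intro: L2_tor_mult_bounded L2_tor_N[OF k])
  moreover obtain B\<rho> where B\<rho>: "AE y in lborel. \<bar>\<rho> y\<bar> \<le> B\<rho>" using \<rho>_bounded by blast
  have "L2_tor (\<lambda>y. (- (\<tau>^2) * \<rho> y) * N k y)"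
  proof (rule L2_tor_mult_bounded[OF _ _ L2_tor_N[OF k]])
    show "(\<lambda>y. - (\<tau>^2) * \<rho> y) \<in> borel_measurable lborel"
      using \<rho>_measurable by measurable
    show "AE y in lborel. \<bar>- (\<tau>^2) * \<rho> y\<bar> \<le> \<tau>^2 * B\<rho>"
      using B\<rho> by eventually_elim (simp add: abs_mult mult_left_mono)
  qed
  ultimately have "L2_tor (\<lambda>y. \<xi> \<bullet> (a y *v (N k y *\<^sub>R \<xi>)) + (- (\<tau>^2) * \<rho> y) * N k y)"
    by (rule L2_tor_add)
  then show ?thesis
    by (simp add: algebra_simps)
qed

lemma grad_form_sym: "grad_form k j = grad_form j k"
  unfolding grad_form_def by (simp add: inner_symmetric_matrix_vector[OF a_symmetric])

lemma zero_order_form_sym: "zero_order_form k j = zero_order_form j k"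
  unfolding zero_order_form_def by (simp add: ac_simps)

lemma cell_identity:
  assumes k: "k \<ge> 1" and j: "j \<ge> 1"
  shows "grad_form k j = mixed_form j (k - 1) - mixed_form (k - 1) j + zero_order_form (k - 2) j"
proof -
  have "set_integrable lborel cube (\<lambda>y. N j y * (\<xi> \<bullet> (a y *v G (k-1) y)))"
    using k j by (intro set_integrable_mult_L2_tor L2_tor_N L2_tor_flux) simp_all
  moreover have "set_integrable lborel cube
      (\<lambda>y. (\<xi> \<bullet> (a y *v \<xi>) - \<rho> y * \<tau>^2) * N (k-2) y * N j y)"
    using k j by (intro set_integrable_mult_L2_tor L2_tor_N L2_tor_zero_order) simp_all
  ultimately have "(LINT y:cube|lborel. (\<xi> \<bullet> (a y *v G (k-1) y)
        + (\<xi> \<bullet> (a y *v \<xi>) - \<rho> y * \<tau>^2) * N (k-2) y) * (N j y - tmean (N j)))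
      = mixed_form j (k - 1) + zero_order_form (k - 2) j"
    unfolding mixed_form_def zero_order_form_def tmean_N[OF j]
    by (subst set_integral_add(2)[symmetric]) (simp_all add: algebra_simps)
  moreover have "(LINT y:cube|lborel. (N (k-1) y *\<^sub>R (a y *v \<xi>)) \<bullet> G j y) = mixed_form (k - 1) j"
    unfolding mixed_form_def
    by (simp add: inner_symmetric_matrix_vector[OF a_symmetric, of _ \<xi>] inner_commute[of \<xi>])
  ultimately show ?thesis
    using cell_weak_form[OF k weak_grad_N[OF j]] unfolding grad_form_def hm1_pair_def by simp
qed

lemma astar_eq:
  assumes "n \<ge> 1"
  shows "astar a \<rho> \<tau> \<xi> N G n = - (mixed_form 0 (n - 1) + zero_order_form (n - 2) 0)"
proof -
  have "set_integrable lborel cube (\<lambda>y. N 0 y * (\<xi> \<bullet> (a y *v G (n-1) y)))"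
    using assms by (intro set_integrable_mult_L2_tor L2_tor_N L2_tor_flux) simp_all
  moreover have "set_integrable lborel cube
      (\<lambda>y. (\<xi> \<bullet> (a y *v \<xi>) - \<rho> y * \<tau>^2) * N (n-2) y * N 0 y)"
    using assms by (intro set_integrable_mult_L2_tor L2_tor_N L2_tor_zero_order) simp_all
  ultimately have "(LINT y:cube|lborel. - (N 0 y * (\<xi> \<bullet> (a y *v G (n-1) y))
        + (\<xi> \<bullet> (a y *v \<xi>) - \<rho> y * \<tau>^2) * N (n-2) y * N 0 y))
      = - (mixed_form 0 (n - 1) + zero_order_form (n - 2) 0)"
    unfolding mixed_form_def zero_order_form_def by (simp only: set_integral_uminus set_integral_add)
  moreover have "astar a \<rho> \<tau> \<xi> N G n = (LINT y:cube|lborel. - (N 0 y * (\<xi> \<bullet> (a y *v G (n-1) y))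
        + (\<xi> \<bullet> (a y *v \<xi>) - \<rho> y * \<tau>^2) * N (n-2) y * N 0 y))"
    unfolding astar_def hm1_pair_def by (simp add: N_zero algebra_simps)
  ultimately show ?thesis by simp
qed

lemma astar_odd_eq_zero:
  assumes "odd n"
  shows "astar a \<rho> \<tau> \<xi> N G (int n) = 0"
proof -
  have "mixed_form 0 (int n - 1) + zero_order_form (int n - 2) 0 = 0"
    by (rule recurrence_odd_boundary_eq_zero[OF grad_form_sym zero_order_form_sym _ _ _ cell_identity
          \<open>odd n\<close>])
      (simp_all add: grad_form_def mixed_form_def zero_order_form_def G_zero N_minus_one)
  moreover have "int n \<ge> 1"
    using \<open>odd n\<close> by (cases n) auto
  ultimately show ?thesis
    by (simp add: astar_eq)
qed

end

theorem theorem2p13: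
  fixes a :: "real^'d \<Rightarrow> real^'d^'d" and \<rho> :: "real^'d \<Rightarrow> real" and m1 :: real
    and \<tau> :: real and \<xi> :: "real^'d"
    and N :: "int \<Rightarrow> real^'d \<Rightarrow> real" and G :: "int \<Rightarrow> real^'d \<Rightarrow> real^'d"
  assumes "periodic a" and "periodic \<rho>"
    and "a \<in> borel_measurable lborel" and "\<rho> \<in> borel_measurable lborel"
    and "\<exists>B. AE y in lborel. \<forall>i j. \<bar>a y $ i $ j\<bar> \<le> B"
    and "\<exists>B. AE y in lborel. \<bar>\<rho> y\<bar> \<le> B"
    and "\<forall>y. transpose (a y) = a y"
    and "m1 > 0"
    and "AE y in lborel. \<forall>\<zeta>. \<zeta> \<bullet> (a y *v \<zeta>) \<ge> m1 * (norm \<zeta>)^2"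
    and "AE y in lborel. \<rho> y \<ge> m1"
    and "cell_seq a \<rho> \<tau> \<xi> N G"
  shows "\<forall>m::nat. astar a \<rho> \<tau> \<xi> N G (2 * int m + 1) = 0"
proof
  fix m :: nat
  \<comment> \<open>Periodicity and coercivity only serve the existence of the cell solutions.\<close>
  interpret cell_problem a \<rho> \<tau> \<xi> N G
    using assms(3-7,11) by unfold_locales auto
  have "odd (2 * m + 1)" by simp
  from astar_odd_eq_zero[OF this]
  show "astar a \<rho> \<tau> \<xi> N G (2 * int m + 1) = 0" by (simp add: add.commute)
qed

end
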